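(* Let $\mathcal{L}^*\supseteq\mathcal{L}$ be relational languages and let $\mathbf{K}$ be a Fraïssé $\mathcal{L}$-structure. Suppose $\mathbf{K}^*$ is a recurrent, precompact $\mathcal{L}^*$-expansion of $\mathbf{K}$ such that $\mathbf{K}^*\to(\mathbf{K}^* )^{\mathbf{A}^*}_2$ for every finite substructure $\mathbf{A}^*\subseteq\mathbf{K}^*$. Then $\mathbf{K}$ has finite big Ramsey degrees, and $\mathbf{K}^*$ is a (recurrent) big Ramsey structure for $\mathbf{K}$; in fact $\mathrm{BRD}(\mathbf{A},\mathbf{K})=|\mathbf{K}^*(\mathbf{A})|$ for every finite $\mathbf{A}\subseteq\mathbf{K}$.
   Context: For structures $\mathbf{A},\mathbf{B}$, $\mathrm{Emb}(\mathbf{A},\mathbf{B})$ is the set of embeddings. For structures $\mathbf{A}\le\mathbf{B}\le\mathbf{C}$, $\mathbf{C}\to(\mathbf{B})^{\mathbf{A}}_2$ means: for every coloring $\chi:\mathrm{Emb}(\mathbf{A},\mathbf{C})\to 2$ there is $g\in\mathrm{Emb}(\mathbf{B},\mathbf{C})$ with $\chi$ constant on $g\circ\mathrm{Emb}(\mathbf{A},\mathbf{B})$. An $\mathcal{L}^*$-expansion $\mathbf{M}^*$ of an $\mathcal{L}$-structure $\mathbf{M}$ is an $\mathcal{L}^*$-structure on the same set whose $\mathcal{L}$-reduct is $\mathbf{M}$. For finite $\mathbf{B}\le\mathbf{M}$, $\mathbf{M}^*(\mathbf{B})$ is the set of $\mathcal{L}^*$-expansions $\mathbf{B}^*$ of $\mathbf{B}$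 that embed into $\mathbf{M}^*$; $\mathbf{M}^*$ is precompact if $\mathbf{M}^*(\mathbf{B})$ is finite for every finite $\mathbf{B}\le\mathbf{M}$. For $f\in\mathrm{Emb}(\mathbf{B},\mathbf{M})$, $\mathbf{M}^*\cdot f$ is the unique $\mathbf{B}^*\in\mathbf{M}^*(\mathbf{B})$ with $f\in\mathrm{Emb}(\mathbf{B}^*,\mathbf{M}^* )$; for $\eta\in\mathrm{Emb}(\mathbf{M},\mathbf{M})$, $\mathbf{M}^*\cdot\eta$ is the expansion of $\mathbf{M}$ pulled back along $\eta$. $\mathbf{M}^*$ is recurrent if $\mathrm{Emb}(\mathbf{M}^*,\mathbf{M}^*\cdot\eta)\ne\emptyset$ for every $\eta\in\mathrm{Emb}(\mathbf{M},\mathbf{M})$. For finite $\mathbf{A}\le\mathbf{K}$, the big Ramsey degree $\mathrm{BRD}(\mathbf{A},\mathbf{K})$ is the least $t$ (if it exists) such that for every $r>t$ and $\chi:\mathrm{Emb}(\mathbf{A},\mathbf{K})\to r$ there is $g\in\mathrm{Emb}(\mathbf{K},\mathbf{K})$ with $|\chi[g\circ\mathrm{Emb}(\mathbf{A},\mathbf{K})]|\le t$; $\mathbf{K}$ has finite big Ramsey degrees if this is finite for all finite $\mathbf{A}\le\mathbf{K}$. A big Ramsey structure for $\mathbf{K}$ is an expansion $\mathbf{K}^*$ such that for every finite $\mathbf{A}\le\mathbf{K}$, $|\mathbf{K}^*(\mathbf{A})|=\mathrm{BRD}(\mathbf{A},\mathbf{K})$ and for every $g\in\mathrm{Emb}(\mathbf{K},\mathbf{K})$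 the coloring $f\mapsto\mathbf{K}^*\cdot f$ takes all $|\mathbf{K}^*(\mathbf{A})|$ values on $g\circ\mathrm{Emb}(\mathbf{A},\mathbf{K})$. *)

theory Defs
  imports Main "HOL-Library.FuncSet" "HOL-Library.Countable_Set"
begin

text \<open>A relational language is a set of relation symbols
  L :: 'r set together with an arity function ar :: 'r => nat (shared by L and its
  expansion language).\<close>

record ('a, 'r) struc =
  univ :: "'a set"
  rels :: "'r \<Rightarrow> 'a list set"

definition wf_struc :: "'r set \<Rightarrow> ('r \<Rightarrow> nat) \<Rightarrow> ('a, 'r) struc \<Rightarrow> bool" where
  "wf_struc L ar A \<longleftrightarrow>
     (\<forall>r. r \<notin> L \<longrightarrow> rels A r = {}) \<and>
     (\<forall>r\<in>L. \<forall>xs\<in>rels A r. length xs = ar r \<and> set xs \<subseteq> univ A)"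

definition reduct :: "'r set \<Rightarrow> ('a, 'r) struc \<Rightarrow> ('a, 'r) struc" where
  "reduct L A = \<lparr>univ = univ A, rels = (\<lambda>r. if r \<in> L then rels A r else {})\<rparr>"

definition Emb :: "'r set \<Rightarrow> ('r \<Rightarrow> nat) \<Rightarrow> ('a, 'r) struc \<Rightarrow> ('a, 'r) struc \<Rightarrow> ('a \<Rightarrow> 'a) set" where
  "Emb L ar A B = {f. f \<in> extensional (univ A) \<and> f ` univ A \<subseteq> univ B \<and> inj_on f (univ A) \<and>
     (\<forall>r\<in>L. \<forall>xs. set xs \<subseteq> univ A \<and> length xs = ar r \<longrightarrow>
        (xs \<in> rels A r \<longleftrightarrow> map f xs \<in> rels B r))}"

definition substr :: "'r set \<Rightarrow> ('r \<Rightarrow> nat) \<Rightarrow> ('a, 'r) struc \<Rightarrow> ('a, 'r) struc \<Rightarrow> bool" where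
  "substr L ar A B \<longleftrightarrow> wf_struc L ar A \<and> univ A \<subseteq> univ B \<and>
     (\<forall>r\<in>L. rels A r = {xs \<in> rels B r. set xs \<subseteq> univ A})"

definition ultrahomogeneous :: "'r set \<Rightarrow> ('r \<Rightarrow> nat) \<Rightarrow> ('a, 'r) struc \<Rightarrow> bool" where
  "ultrahomogeneous L ar K \<longleftrightarrow>
     (\<forall>A B h. substr L ar A K \<and> substr L ar B K \<and> finite (univ A) \<and>
        h \<in> Emb L ar A B \<and> h ` univ A = univ B \<longrightarrow>
        (\<exists>\<sigma>\<in>Emb L ar K K. \<sigma> ` univ K = univ K \<and> (\<forall>x\<in>univ A. \<sigma> x = h x)))"

definition fraisse :: "'r set \<Rightarrow> ('r \<Rightarrow> nat) \<Rightarrow> ('a, 'r) struc \<Rightarrow> bool" where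
  "fraisse L ar K \<longleftrightarrow> wf_struc L ar K \<and> countable (univ K) \<and> infinite (univ K) \<and>
     ultrahomogeneous L ar K"

definition expansion :: "'r set \<Rightarrow> 'r set \<Rightarrow> ('r \<Rightarrow> nat) \<Rightarrow> ('a, 'r) struc \<Rightarrow> ('a, 'r) struc \<Rightarrow> bool" where
  "expansion L Lstar ar Ms M \<longleftrightarrow> wf_struc Lstar ar Ms \<and> reduct L Ms = M"

definition expansions_in :: "'r set \<Rightarrow> 'r set \<Rightarrow> ('r \<Rightarrow> nat) \<Rightarrow> ('a, 'r) struc \<Rightarrow> ('a, 'r) struc
    \<Rightarrow> ('a, 'r) struc set" where
  "expansions_in L Lstar ar Ms B =
     {Bs. expansion L Lstar ar Bs B \<and> Emb Lstar ar Bs Ms \<noteq> {}}"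

definition pullback :: "'r set \<Rightarrow> ('r \<Rightarrow> nat) \<Rightarrow> ('a, 'r) struc \<Rightarrow> ('a, 'r) struc \<Rightarrow> ('a \<Rightarrow> 'a)
    \<Rightarrow> ('a, 'r) struc" where
  "pullback Lstar ar Ms B f = \<lparr>univ = univ B,
     rels = (\<lambda>r. if r \<in> Lstar then
        {xs. length xs = ar r \<and> set xs \<subseteq> univ B \<and> map f xs \<in> rels Ms r} else {})\<rparr>"

definition precompact :: "'r set \<Rightarrow> 'r set \<Rightarrow> ('r \<Rightarrow> nat) \<Rightarrow> ('a, 'r) struc \<Rightarrow> ('a, 'r) struc \<Rightarrow> bool" where
  "precompact L Lstar ar Ms M \<longleftrightarrow>
     (\<forall>B. substr L ar B M \<and> finite (univ B) \<longrightarrow> finite (expansions_in L Lstar ar Ms B))"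

definition recurrent :: "'r set \<Rightarrow> 'r set \<Rightarrow> ('r \<Rightarrow> nat) \<Rightarrow> ('a, 'r) struc \<Rightarrow> ('a, 'r) struc \<Rightarrow> bool" where
  "recurrent L Lstar ar Ms M \<longleftrightarrow>
     (\<forall>\<eta>\<in>Emb L ar M M. Emb Lstar ar Ms (pullback Lstar ar Ms M \<eta>) \<noteq> {})"

definition arrow2 :: "'r set \<Rightarrow> ('r \<Rightarrow> nat) \<Rightarrow> ('a, 'r) struc \<Rightarrow> ('a, 'r) struc \<Rightarrow> ('a, 'r) struc \<Rightarrow> bool" where
  "arrow2 L ar C B A \<longleftrightarrow>
     (\<forall>\<chi> \<in> Emb L ar A C \<rightarrow> {..<(2::nat)}. \<exists>g\<in>Emb L ar B C. \<exists>c.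
        \<forall>f\<in>Emb L ar A B. \<chi> (compose (univ A) g f) = c)"

definition brd_bound :: "'r set \<Rightarrow> ('r \<Rightarrow> nat) \<Rightarrow> ('a, 'r) struc \<Rightarrow> ('a, 'r) struc \<Rightarrow> nat \<Rightarrow> bool" where
  "brd_bound L ar K A t \<longleftrightarrow>
     (\<forall>r>t. \<forall>\<chi> \<in> Emb L ar A K \<rightarrow> {..<r}. \<exists>g\<in>Emb L ar K K.
        card (\<chi> ` ((\<lambda>f. compose (univ A) g f) ` Emb L ar A K)) \<le> t)"

definition BRD :: "'r set \<Rightarrow> ('r \<Rightarrow> nat) \<Rightarrow> ('a, 'r) struc \<Rightarrow> ('a, 'r) struc \<Rightarrow> nat" where
  "BRD L ar A K = (LEAST t. brd_bound L ar K A t)"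

definition finite_BRD :: "'r set \<Rightarrow> ('r \<Rightarrow> nat) \<Rightarrow> ('a, 'r) struc \<Rightarrow> bool" where
  "finite_BRD L ar K \<longleftrightarrow>
     (\<forall>A. substr L ar A K \<and> finite (univ A) \<longrightarrow> (\<exists>t. brd_bound L ar K A t))"

definition big_ramsey_structure :: "'r set \<Rightarrow> 'r set \<Rightarrow> ('r \<Rightarrow> nat) \<Rightarrow> ('a, 'r) struc \<Rightarrow> ('a, 'r) struc \<Rightarrow> bool" where
  "big_ramsey_structure L Lstar ar Ks K \<longleftrightarrow> expansion L Lstar ar Ks K \<and>
     (\<forall>A. substr L ar A K \<and> finite (univ A) \<longrightarrow>
        card (expansions_in L Lstar ar Ks A) = BRD L ar A K \<and>
        (\<forall>g\<in>Emb L ar K K.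
           expansions_in L Lstar ar Ks A \<subseteq>
             (\<lambda>f. pullback Lstar ar Ks A f) ` ((\<lambda>f. compose (univ A) g f) ` Emb L ar A K)))"

end

theory Submission
  imports Defs
begin

(* Every L-embedding f of A into K is an Lstar-embedding into Ks of the expansion Ks.f of A, so
   Emb(A, K) splits into the finitely many pieces Emb(Bs, Ks) with Bs in Ks(A). Given a colouring
   with more than |Ks(A)| colours, the Ramsey property of Ks (raised from 2 colours to any finite
   number and applied to the pieces one after another) gives a self-embedding h of Ks on whose image
   every piece is monochromatic; h is also a self-embedding of K, so at most |Ks(A)| colours
   survive. Conversely, colouring f by Ks.f leaves all |Ks(A)| colours on every copy g of K:
   recurrence embeds Ks into Ks.g, and composing an embedding of Bs into Ks with it yields an f
   with Ks.(g o f) = Bs. *)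

lemma map_compose: "set xs \<subseteq> A \<Longrightarrow> map (compose A g f) xs = map g (map f xs)"
  by (induction xs) (auto simp: compose_eq)

lemma Emb_funcset: "f \<in> Emb L ar A B \<Longrightarrow> f \<in> univ A \<rightarrow> univ B"
  unfolding Emb_def by blast

lemma Emb_compose:
  assumes f: "f \<in> Emb L ar A B" and g: "g \<in> Emb L ar B C"
  shows "compose (univ A) g f \<in> Emb L ar A C"
proof -
  have f_into: "f ` univ A \<subseteq> univ B" using f unfolding Emb_def by blast
  have f_rels: "xs \<in> rels A r \<longleftrightarrow> map f xs \<in> rels B r"
      if "r \<in> L" "set xs \<subseteq> univ A" "length xs = ar r" for r xs
    using f that unfolding Emb_def by blast
  have g_rels: "ys \<in> rels B r \<longleftrightarrow> map g ys \<in> rels C r"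
    if "r \<in> L" "set ys \<subseteq> univ B" "length ys = ar r" for r ys
    using g that unfolding Emb_def by blast
  have "compose (univ A) g f ` univ A \<subseteq> univ C" "inj_on (compose (univ A) g f) (univ A)"
    using f g unfolding Emb_def inj_on_def by (auto simp: compose_eq image_subset_iff)
  moreover have "xs \<in> rels A r \<longleftrightarrow> map (compose (univ A) g f) xs \<in> rels C r"
    if "r \<in> L" "set xs \<subseteq> univ A" "length xs = ar r" for r xs
  proof -
    have "set (map f xs) \<subseteq> univ B" using f_into that(2) by auto
    then show ?thesis using that f_rels g_rels[of r "map f xs"] by (simp add: map_compose)
  qed
  ultimately show ?thesis unfolding Emb_def by auto
qed

lemma Emb_id: "(\<lambda>x\<in>univ A. x) \<in> Emb L ar A A"
proof -
  have "map (\<lambda>x\<in>univ A. x) xs = xs" if "set xs \<subseteq> univ A" for xs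
    using that by (induction xs) auto
  then show ?thesis unfolding Emb_def by auto
qed

lemma compose_Emb_assoc:
  "f \<in> Emb L ar A B \<Longrightarrow>
    compose (univ A) (compose (univ B) g h) f = compose (univ A) g (compose (univ A) h f)"
  by (metis Emb_funcset compose_assoc)

lemma Emb_cancel:
  assumes gf: "compose (univ A) g f \<in> Emb L ar A C" and g: "g \<in> Emb L ar B C"
    and "f \<in> extensional (univ A)" and f_into: "f ` univ A \<subseteq> univ B"
  shows "f \<in> Emb L ar A B"
proof -
  have "inj_on (compose (univ A) g f) (univ A)" using gf unfolding Emb_def by blast
  then have "inj_on f (univ A)" unfolding inj_on_def by (metis compose_eq)
  moreover have "xs \<in> rels A r \<longleftrightarrow> map f xs \<in> rels B r"
    if "r \<in> L" "set xs \<subseteq> univ A" "length xs = ar r" for r xs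
  proof -
    have "set (map f xs) \<subseteq> univ B" using f_into that(2) by auto
    moreover have "xs \<in> rels A r \<longleftrightarrow> map (compose (univ A) g f) xs \<in> rels C r"
      using gf that unfolding Emb_def by blast
    moreover have "map f xs \<in> rels B r \<longleftrightarrow> map g (map f xs) \<in> rels C r"
      using g that calculation(1) unfolding Emb_def by auto
    ultimately show ?thesis using that(2) by (simp add: map_compose)
  qed
  ultimately show ?thesis using assms unfolding Emb_def by auto
qed

lemma Emb_reduct: "L \<subseteq> Lstar \<Longrightarrow> f \<in> Emb Lstar ar B C \<Longrightarrow> f \<in> Emb L ar (reduct L B) (reduct L C)"
  unfolding Emb_def reduct_def by auto

lemma Emb_inv_into:
  assumes a: "a \<in> Emb L ar A B" and onto: "a ` univ A = univ B"
  shows "(\<lambda>y\<in>univ B. inv_into (univ A) a y) \<in> Emb L ar B A" (is "?b \<in> _")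
proof -
  have a_rels: "xs \<in> rels A r \<longleftrightarrow> map a xs \<in> rels B r"
    if "r \<in> L" "set xs \<subseteq> univ A" "length xs = ar r" for r xs
    using a that unfolding Emb_def by blast
  have into: "?b ` univ B \<subseteq> univ A" using onto by (auto intro: inv_into_into)
  have ab: "a (?b y) = y" if "y \<in> univ B" for y
    using that onto by (auto simp: f_inv_into_f)
  then have "inj_on ?b (univ B)" by (metis inj_onI)
  moreover have "ys \<in> rels B r \<longleftrightarrow> map ?b ys \<in> rels A r"
    if "r \<in> L" "set ys \<subseteq> univ B" "length ys = ar r" for r ys
  proof -
    have "map a (map ?b ys) = ys" using that(2) ab by (induction ys) auto
    moreover have "set (map ?b ys) \<subseteq> univ A" using into that(2) by auto
    ultimately show ?thesis using a_rels[of r "map ?b ys"] that by auto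
  qed
  ultimately show ?thesis using into unfolding Emb_def by auto
qed

definition induced :: "'r set \<Rightarrow> ('a, 'r) struc \<Rightarrow> 'a set \<Rightarrow> ('a, 'r) struc" where
  "induced L M S = \<lparr>univ = S, rels = (\<lambda>r. if r \<in> L then {xs \<in> rels M r. set xs \<subseteq> S} else {})\<rparr>"

lemma substr_induced: "wf_struc L ar M \<Longrightarrow> S \<subseteq> univ M \<Longrightarrow> substr L ar (induced L M S) M"
  unfolding substr_def wf_struc_def induced_def by auto

lemma Emb_induced_image: "a \<in> Emb L ar B M \<Longrightarrow> a \<in> Emb L ar B (induced L M (a ` univ B))"
  unfolding Emb_def induced_def by auto

lemma colouring_compose_Emb:
  "\<chi> \<in> Emb L ar A M \<rightarrow> X \<Longrightarrow> g \<in> Emb L ar M M \<Longrightarrow> (\<lambda>f. \<chi> (compose (univ A) g f)) \<in> Emb L ar A M \<rightarrow> X"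
  using Emb_compose by blast

definition self_arrow :: "'r set \<Rightarrow> ('r \<Rightarrow> nat) \<Rightarrow> ('a, 'r) struc \<Rightarrow> ('a, 'r) struc \<Rightarrow> nat \<Rightarrow> bool" where
  "self_arrow L ar M A n \<longleftrightarrow> (\<forall>\<chi> \<in> Emb L ar A M \<rightarrow> {..<n}. \<exists>g\<in>Emb L ar M M. \<exists>c.
      \<forall>f\<in>Emb L ar A M. \<chi> (compose (univ A) g f) = c)"

lemma self_arrowD:
  "self_arrow L ar M A n \<Longrightarrow> \<chi> \<in> Emb L ar A M \<rightarrow> {..<n} \<Longrightarrow>
    \<exists>g\<in>Emb L ar M M. \<exists>c. \<forall>f\<in>Emb L ar A M. \<chi> (compose (univ A) g f) = c"
  unfolding self_arrow_def by blast

lemma arrow2_eq_self_arrow: "arrow2 L ar M M A = self_arrow L ar M A 2"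
  by (simp add: arrow2_def self_arrow_def)

lemma self_arrow_from_two:
  assumes two: "self_arrow L ar M A 2"
  shows "self_arrow L ar M A n"
proof (induction n)
  case 0
  show ?case unfolding self_arrow_def using Emb_id by fastforce
next
  case (Suc n)
  show ?case unfolding self_arrow_def
  proof
    fix \<chi> assume \<chi>: "\<chi> \<in> Emb L ar A M \<rightarrow> {..<Suc n}"
    have "(\<lambda>f. if \<chi> f = n then 1 else 0) \<in> Emb L ar A M \<rightarrow> {..<2::nat}" by auto
    then obtain g1 c1 where g1: "g1 \<in> Emb L ar M M"
      and c1: "\<forall>f\<in>Emb L ar A M. (if \<chi> (compose (univ A) g1 f) = n then 1 else 0) = (c1::nat)"
      using self_arrowD[OF two] by blast
    consider "\<forall>f\<in>Emb L ar A M. \<chi> (compose (univ A) g1 f) = n"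
      | "\<forall>f\<in>Emb L ar A M. \<chi> (compose (univ A) g1 f) \<noteq> n"
      using c1 by (metis zero_neq_one)
    then show "\<exists>g\<in>Emb L ar M M. \<exists>c. \<forall>f\<in>Emb L ar A M. \<chi> (compose (univ A) g f) = c"
    proof cases
      case 1
      then show ?thesis using g1 by blast
    next
      case 2
      have "(\<lambda>f. \<chi> (compose (univ A) g1 f)) \<in> Emb L ar A M \<rightarrow> {..<n}"
        using 2 colouring_compose_Emb[OF \<chi> g1] by (fastforce simp: less_Suc_eq)
      then obtain g2 c where g2: "g2 \<in> Emb L ar M M"
        and c: "\<forall>f\<in>Emb L ar A M. \<chi> (compose (univ A) g1 (compose (univ A) g2 f)) = c"
        using self_arrowD[OF Suc.IH] by blast
      have "\<forall>f\<in>Emb L ar A M. \<chi> (compose (univ A) (compose (univ M) g1 g2) f) = c"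
        using c by (simp add: compose_Emb_assoc)
      then show ?thesis using Emb_compose[OF g2 g1] by blast
    qed
  qed
qed

lemma self_arrow_iso:
  assumes a: "a \<in> Emb L ar A D" and onto: "a ` univ A = univ D" and D: "self_arrow L ar M D n"
  shows "self_arrow L ar M A n"
  unfolding self_arrow_def
proof
  fix \<chi> assume \<chi>: "\<chi> \<in> Emb L ar A M \<rightarrow> {..<n}"
  define b where "b = (\<lambda>y\<in>univ D. inv_into (univ A) a y)"
  have b: "b \<in> Emb L ar D A" unfolding b_def using Emb_inv_into[OF a onto] .
  have "(\<lambda>\<phi>. \<chi> (compose (univ A) \<phi> a)) \<in> Emb L ar D M \<rightarrow> {..<n}"
    using \<chi> Emb_compose[OF a] by blast
  then obtain g c where g: "g \<in> Emb L ar M M"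
    and c: "\<forall>\<phi>\<in>Emb L ar D M. \<chi> (compose (univ A) (compose (univ D) g \<phi>) a) = c"
    using self_arrowD[OF D] by blast
  have "\<chi> (compose (univ A) g f) = c" if f: "f \<in> Emb L ar A M" for f
  proof -
    have "inj_on a (univ A)" using a unfolding Emb_def by blast
    then have
      "compose (univ A) (compose (univ D) g (compose (univ D) f b)) a = compose (univ A) g f"
      using onto by (auto simp: fun_eq_iff compose_def b_def)
    then show ?thesis using c Emb_compose[OF b f] by metis
  qed
  then show "\<exists>g\<in>Emb L ar M M. \<exists>c. \<forall>f\<in>Emb L ar A M. \<chi> (compose (univ A) g f) = c"
    using g by blast
qed

lemma self_arrow_of_Emb:
  assumes "wf_struc L ar M"
    and ramsey: "\<forall>D. substr L ar D M \<and> finite (univ D) \<longrightarrow> arrow2 L ar M M D"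
    and "finite (univ A)" and a: "a \<in> Emb L ar A M"
  shows "self_arrow L ar M A n"
proof -
  let ?D = "induced L M (a ` univ A)"
  have "substr L ar ?D M"
    using substr_induced[OF assms(1)] Emb_funcset[OF a] by blast
  moreover have "finite (univ ?D)" using assms(3) by (simp add: induced_def)
  ultimately have "self_arrow L ar M ?D n"
    using ramsey arrow2_eq_self_arrow self_arrow_from_two by metis
  then show ?thesis
    using self_arrow_iso[OF Emb_induced_image[OF a]] by (simp add: induced_def)
qed

lemma self_arrow_simultaneous:
  assumes "finite S" and "\<forall>A\<in>S. self_arrow L ar M A n" and "\<forall>A\<in>S. \<chi> \<in> Emb L ar A M \<rightarrow> {..<n}"
  shows "\<exists>h\<in>Emb L ar M M. \<forall>A\<in>S. \<exists>c. \<forall>f\<in>Emb L ar A M. \<chi> (compose (univ A) h f) = c"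
  using assms
proof (induction S rule: finite_induct)
  case empty
  then show ?case using Emb_id by blast
next
  case (insert A S)
  then obtain h where h: "h \<in> Emb L ar M M"
    and hS: "\<forall>B\<in>S. \<exists>c. \<forall>f\<in>Emb L ar B M. \<chi> (compose (univ B) h f) = c"
    by blast
  have "(\<lambda>f. \<chi> (compose (univ A) h f)) \<in> Emb L ar A M \<rightarrow> {..<n}"
    by (rule colouring_compose_Emb[OF _ h]) (use insert.prems(2) in simp)
  then obtain g c where g: "g \<in> Emb L ar M M"
    and c: "\<forall>f\<in>Emb L ar A M. \<chi> (compose (univ A) h (compose (univ A) g f)) = c"
    using self_arrowD insert.prems(1) by blast
  have "\<exists>c. \<forall>f\<in>Emb L ar B M. \<chi> (compose (univ B) (compose (univ M) h g) f) = c"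
    if "B \<in> insert A S" for B
  proof (cases "B = A")
    case True
    then show ?thesis using c by (auto simp: compose_Emb_assoc)
  next
    case False
    then have "B \<in> S" using that by simp
    then obtain c' where "\<forall>f\<in>Emb L ar B M. \<chi> (compose (univ B) h f) = c'"
      using hS by blast
    then show ?thesis using Emb_compose[OF _ g] by (auto simp: compose_Emb_assoc)
  qed
  then show ?case using Emb_compose[OF g h] by blast
qed

lemma Emb_pullback:
  "f \<in> Emb L ar A N \<Longrightarrow> univ N = univ M \<Longrightarrow> f \<in> Emb Lstar ar (pullback Lstar ar M A f) M"
  unfolding Emb_def pullback_def by auto

lemma pullback_eq_of_Emb:
  assumes wf: "wf_struc Lstar ar B" and h: "h \<in> Emb Lstar ar B M" and univ_B: "univ B = univ A"
  shows "pullback Lstar ar M A h = B"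
proof (rule struc.equality)
  have "rels (pullback Lstar ar M A h) r = rels B r" for r
  proof (cases "r \<in> Lstar")
    case True
    have B_rels: "length xs = ar r \<and> set xs \<subseteq> univ B" if "xs \<in> rels B r" for xs
      using wf True that unfolding wf_struc_def by blast
    have h_rels: "xs \<in> rels B r \<longleftrightarrow> map h xs \<in> rels M r"
      if "set xs \<subseteq> univ B" "length xs = ar r" for xs
      using h True that unfolding Emb_def by blast
    show ?thesis
      using True by (simp add: pullback_def set_eq_iff) (metis B_rels h_rels univ_B)
  next
    case False
    then show ?thesis using wf by (simp add: wf_struc_def pullback_def)
  qed
  then show "rels (pullback Lstar ar M A h) = rels B" by blast
qed (simp_all add: univ_B pullback_def)

lemma reduct_pullback:
  "L \<subseteq> Lstar \<Longrightarrow> reduct L (pullback Lstar ar M A f) = pullback L ar (reduct L M) A f"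
  unfolding reduct_def pullback_def by (auto simp: fun_eq_iff)

lemma not_brd_bound_less_card:
  assumes "finite E" and c: "c \<in> Emb L ar A K \<rightarrow> E"
    and persist: "\<forall>g\<in>Emb L ar K K. E \<subseteq> c ` (\<lambda>f. compose (univ A) g f) ` Emb L ar A K"
    and "t < card E"
  shows "\<not> brd_bound L ar K A t"
proof
  assume bound: "brd_bound L ar K A t"
  obtain idx where idx: "bij_betw idx E {0..<card E}"
    using ex_bij_betw_finite_nat[OF \<open>finite E\<close>] by blast
  have "idx \<circ> c \<in> Emb L ar A K \<rightarrow> {..<card E}"
    using c bij_betw_apply[OF idx] by (auto simp: Pi_iff)
  then obtain g where g: "g \<in> Emb L ar K K"
    and small: "card ((idx \<circ> c) ` (\<lambda>f. compose (univ A) g f) ` Emb L ar A K) \<le> t"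
    using bound \<open>t < card E\<close> unfolding brd_bound_def by blast
  have "c ` (\<lambda>f. compose (univ A) g f) ` Emb L ar A K = E"
    using persist g c Emb_compose[OF _ g] by blast
  then have "(idx \<circ> c) ` (\<lambda>f. compose (univ A) g f) ` Emb L ar A K = idx ` E"
    by (metis image_comp)
  then have "card ((idx \<circ> c) ` (\<lambda>f. compose (univ A) g f) ` Emb L ar A K) = card E"
    using card_image[OF bij_betw_imp_inj_on[OF idx]] by simp
  then show False using small \<open>t < card E\<close> by simp
qed

lemma BRD_eqI:
  "brd_bound L ar K A t \<Longrightarrow> (\<And>s. s < t \<Longrightarrow> \<not> brd_bound L ar K A s) \<Longrightarrow> BRD L ar A K = t"
  unfolding BRD_def by (rule Least_equality) (auto simp: not_less[symmetric])

locale expanded_structure =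
  fixes L Lstar :: "'r set" and ar :: "'r \<Rightarrow> nat" and K Ks :: "('a, 'r) struc"
  assumes L_subset: "L \<subseteq> Lstar" and expansion: "expansion L Lstar ar Ks K"
begin

lemma wf_struc_Ks: "wf_struc Lstar ar Ks" and reduct_Ks: "reduct L Ks = K"
  using expansion unfolding expansion_def by auto

lemma univ_K: "univ K = univ Ks"
  using reduct_Ks unfolding reduct_def by auto

lemma Emb_reduct_Ks: "f \<in> Emb Lstar ar B Ks \<Longrightarrow> f \<in> Emb L ar (reduct L B) K"
  using Emb_reduct[OF L_subset] reduct_Ks by metis

lemma reduct_expansions_in: "B \<in> expansions_in L Lstar ar Ks A \<Longrightarrow> reduct L B = A"
  unfolding expansions_in_def expansion_def by blast

lemma univ_expansions_in: "B \<in> expansions_in L Lstar ar Ks A \<Longrightarrow> univ B = univ A"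
  using reduct_expansions_in unfolding reduct_def by fastforce

lemma pullback_eq_of_expansions_in:
  "B \<in> expansions_in L Lstar ar Ks A \<Longrightarrow> f \<in> Emb Lstar ar B Ks \<Longrightarrow> pullback Lstar ar Ks A f = B"
  using pullback_eq_of_Emb univ_expansions_in unfolding expansions_in_def expansion_def by blast

lemma pullback_in_expansions_in:
  assumes A: "wf_struc L ar A" and f: "f \<in> Emb L ar A K"
  shows "pullback Lstar ar Ks A f \<in> expansions_in L Lstar ar Ks A"
proof -
  have "reduct L (pullback Lstar ar Ks A f) = A"
    using reduct_pullback[OF L_subset] pullback_eq_of_Emb[OF A f refl] reduct_Ks by metis
  moreover have "wf_struc Lstar ar (pullback Lstar ar Ks A f)"
    unfolding wf_struc_def pullback_def by auto
  ultimately show ?thesis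
    using Emb_pullback[OF f univ_K] unfolding expansions_in_def expansion_def by blast
qed

lemma Emb_eq_UN_expansions_in:
  assumes "wf_struc L ar A"
  shows "Emb L ar A K = (\<Union>B\<in>expansions_in L Lstar ar Ks A. Emb Lstar ar B Ks)"
proof
  show "Emb L ar A K \<subseteq> (\<Union>B\<in>expansions_in L Lstar ar Ks A. Emb Lstar ar B Ks)"
  proof
    fix f assume "f \<in> Emb L ar A K"
    then show "f \<in> (\<Union>B\<in>expansions_in L Lstar ar Ks A. Emb Lstar ar B Ks)"
      using pullback_in_expansions_in[OF assms] Emb_pullback[OF _ univ_K, of f L ar A Lstar]
      by blast
  qed
  show "(\<Union>B\<in>expansions_in L Lstar ar Ks A. Emb Lstar ar B Ks) \<subseteq> Emb L ar A K"
    using Emb_reduct_Ks reduct_expansions_in by fastforce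
qed

lemma brd_bound_card_expansions_in:
  assumes ramsey: "\<forall>As. substr Lstar ar As Ks \<and> finite (univ As) \<longrightarrow> arrow2 Lstar ar Ks Ks As"
    and A: "wf_struc L ar A" "finite (univ A)"
    and fin: "finite (expansions_in L Lstar ar Ks A)"
  shows "brd_bound L ar K A (card (expansions_in L Lstar ar Ks A))"
  unfolding brd_bound_def
proof (intro allI impI ballI)
  let ?E = "expansions_in L Lstar ar Ks A"
  fix r :: nat and \<chi> assume \<chi>: "\<chi> \<in> Emb L ar A K \<rightarrow> {..<r}"
  have "\<forall>B\<in>?E. self_arrow Lstar ar Ks B r"
    using self_arrow_of_Emb[OF wf_struc_Ks ramsey] univ_expansions_in A(2)
    unfolding expansions_in_def by fastforce
  moreover have "\<forall>B\<in>?E. \<chi> \<in> Emb Lstar ar B Ks \<rightarrow> {..<r}"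
    using \<chi> Emb_eq_UN_expansions_in[OF A(1)] by blast
  ultimately obtain h where h: "h \<in> Emb Lstar ar Ks Ks"
    and "\<forall>B\<in>?E. \<exists>c. \<forall>f\<in>Emb Lstar ar B Ks. \<chi> (compose (univ B) h f) = c"
    using self_arrow_simultaneous[OF fin] by blast
  then obtain c where c: "\<forall>B\<in>?E. \<forall>f\<in>Emb Lstar ar B Ks. \<chi> (compose (univ A) h f) = c B"
    using univ_expansions_in by metis
  have "\<chi> ` (\<lambda>f. compose (univ A) h f) ` Emb L ar A K \<subseteq> c ` ?E"
    using c Emb_eq_UN_expansions_in[OF A(1)] by blast
  then have "card (\<chi> ` (\<lambda>f. compose (univ A) h f) ` Emb L ar A K) \<le> card ?E"
    using fin by (meson card_image_le card_mono finite_imageI order_trans)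
  moreover have "h \<in> Emb L ar K K" using Emb_reduct_Ks[OF h] reduct_Ks by simp
  ultimately show
    "\<exists>g\<in>Emb L ar K K. card (\<chi> ` (\<lambda>f. compose (univ A) g f) ` Emb L ar A K) \<le> card ?E"
    by blast
qed

lemma expansions_in_subset_pullback_copy:
  assumes rec: "recurrent L Lstar ar Ks K" and g: "g \<in> Emb L ar K K"
  shows "expansions_in L Lstar ar Ks A
    \<subseteq> (\<lambda>f. pullback Lstar ar Ks A f) ` (\<lambda>f. compose (univ A) g f) ` Emb L ar A K"
proof
  fix B assume B: "B \<in> expansions_in L Lstar ar Ks A"
  obtain e where e: "e \<in> Emb Lstar ar Ks (pullback Lstar ar Ks K g)"
    using rec g unfolding recurrent_def by blast
  obtain a where a: "a \<in> Emb Lstar ar B Ks"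
    using B unfolding expansions_in_def by blast
  define f where "f = compose (univ A) e a"
  have f: "f \<in> Emb Lstar ar B (pullback Lstar ar Ks K g)"
    using Emb_compose[OF a e] univ_expansions_in[OF B] by (simp add: f_def)
  have gf: "compose (univ A) g f \<in> Emb Lstar ar B Ks"
    using Emb_compose[OF f Emb_pullback[OF g univ_K]] univ_expansions_in[OF B] by simp
  have "f \<in> extensional (univ A)" "f ` univ A \<subseteq> univ K"
    using f univ_expansions_in[OF B] unfolding Emb_def pullback_def by auto
  then have "f \<in> Emb L ar A K"
    using Emb_cancel Emb_reduct_Ks[OF gf] reduct_expansions_in[OF B] g by metis
  moreover have "pullback Lstar ar Ks A (compose (univ A) g f) = B"
    using pullback_eq_of_expansions_in[OF B gf] .
  ultimately show "B \<in> (\<lambda>f. pullback Lstar ar Ks A f) ` (\<lambda>f. compose (univ A) g f) ` Emb L ar A K"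
    by blast
qed

lemma BRD_eq_card_expansions_in:
  assumes "recurrent L Lstar ar Ks K"
    and "\<forall>As. substr Lstar ar As Ks \<and> finite (univ As) \<longrightarrow> arrow2 Lstar ar Ks Ks As"
    and "wf_struc L ar A" "finite (univ A)" "finite (expansions_in L Lstar ar Ks A)"
  shows "BRD L ar A K = card (expansions_in L Lstar ar Ks A)"
proof (rule BRD_eqI)
  show "brd_bound L ar K A (card (expansions_in L Lstar ar Ks A))"
    using brd_bound_card_expansions_in assms(2-) by blast
  show "\<not> brd_bound L ar K A s" if "s < card (expansions_in L Lstar ar Ks A)" for s
    using not_brd_bound_less_card[OF assms(5) _ _ that]
      pullback_in_expansions_in[OF assms(3)] expansions_in_subset_pullback_copy[OF assms(1)]
    by blast
qed

end

theorem proposition2p8: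
  fixes L Lstar :: "'r set" and ar :: "'r \<Rightarrow> nat"
    and K Ks :: "('a, 'r) struc"
  assumes "L \<subseteq> Lstar"
    and "fraisse L ar K"
    and "expansion L Lstar ar Ks K"
    and "recurrent L Lstar ar Ks K"
    and "precompact L Lstar ar Ks K"
    and "\<forall>As. substr Lstar ar As Ks \<and> finite (univ As) \<longrightarrow> arrow2 Lstar ar Ks Ks As"
  shows "finite_BRD L ar K \<and> big_ramsey_structure L Lstar ar Ks K \<and>
         (\<forall>A. substr L ar A K \<and> finite (univ A) \<longrightarrow>
              BRD L ar A K = card (expansions_in L Lstar ar Ks A))"
proof -
  interpret expanded_structure L Lstar ar K Ks
    using assms(1,3) by unfold_locales
  have "brd_bound L ar K A (card (expansions_in L Lstar ar Ks A))"
    and "BRD L ar A K = card (expansions_in L Lstar ar Ks A)"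
    if "substr L ar A K" "finite (univ A)" for A
  proof -
    have "wf_struc L ar A" using that(1) unfolding substr_def by blast
    moreover have "finite (expansions_in L Lstar ar Ks A)"
      using assms(5) that unfolding precompact_def by blast
    ultimately show "brd_bound L ar K A (card (expansions_in L Lstar ar Ks A))"
      and "BRD L ar A K = card (expansions_in L Lstar ar Ks A)"
      using brd_bound_card_expansions_in BRD_eq_card_expansions_in assms(4,6) that(2) by blast+
  qed
  then show ?thesis
    using assms(3) expansions_in_subset_pullback_copy[OF assms(4)]
    unfolding finite_BRD_def big_ramsey_structure_def by auto
qed

end
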